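(* Let $K\in\mathcal S_2$ be nonempty and bounded, and let $u\in S^1$. Then the Steiner symmetral $S_u(K)$ also belongs to $\mathcal S_2$.
   Context: For $x\in\mathbb R^n$, $B(x,1)$ is the closed Euclidean unit ball centered at $x$. The class $\mathcal S_n$ of ball-bodies consists of all intersections of families of closed Euclidean unit balls in $\mathbb R^n$ (equivalently, sets of the form $A^c=\bigcap_{x\in A}B(x,1)$, $A\subseteq\mathbb R^n$). For a compact convex set $K$ and $u\in S^{n-1}$, for each $x$ in the orthogonal projection $P_{u^\perp}(K)$ write $K\cap(x+\mathbb Ru)=[x+a(x)u,x+b(x)u]$; the Steiner symmetral is $S_u(K)=\{x+yu: x\in P_{u^\perp}(K),\ |y|\le |b(x)-a(x)|/2\}$. *)

theory Defs
  imports "HOL-Analysis.Analysis"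
begin

text \<open>Class S_n of ball-bodies: intersections of families of closed unit balls
  (the empty family gives the whole space).\<close>
definition ball_bodies :: "('a::euclidean_space) set set" where
  "ball_bodies = {K. \<exists>A. K = (\<Inter>x\<in>A. cball x 1)}"

definition proj_perp :: "'a::real_inner \<Rightarrow> 'a \<Rightarrow> 'a" where
  "proj_perp u z = z - (z \<bullet> u) *\<^sub>R u"

text \<open>For x in the projection, K \<inter> (x + R u) = [x + a(x) u, x + b(x) u];
  a(x), b(x) are the endpoints of the parameter interval.\<close>
definition sec_lo :: "'a::real_inner set \<Rightarrow> 'a \<Rightarrow> 'a \<Rightarrow> real" where
  "sec_lo K u x = Inf {t. x + t *\<^sub>R u \<in> K}"

definition sec_hi :: "'a::real_inner set \<Rightarrow> 'a \<Rightarrow> 'a \<Rightarrow> real" where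
  "sec_hi K u x = Sup {t. x + t *\<^sub>R u \<in> K}"

definition steiner_symmetral :: "'a::real_inner \<Rightarrow> 'a set \<Rightarrow> 'a set" where
  "steiner_symmetral u K =
     {x + y *\<^sub>R u | x y. x \<in> proj_perp u ` K \<and> \<bar>y\<bar> \<le> \<bar>sec_hi K u x - sec_lo K u x\<bar> / 2}"

end

theory Submission
  imports Defs
begin

text \<open>
  After an orthogonal change of coordinates, u = (0, 1) and K is the intersection of the unit
  discs centred at the points of a compact set A. Over each abscissa x of the shadow of K the
  fibre runs from the highest lower arc of these circles (that of some d in A) to the lowest
  upper arc (that of some c in A), so S_u(K) lies between the graphs of -h and h, where h is half
  the gap between the upper arc of c and the lower arc of d. Up to a constant, h is the mean of
  two unit semicircles, and the power mean inequality M_2 \<le> M_3 shows that such a mean is at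
  least as curved as a unit circle. Hence the graph of h lies below the unit circle touching it
  from below at x. As h(x) is at most the height of the point of contact above the centre, the
  centre lies on or below the axis and the disc contains all of S_u(K); it cuts off every point
  above the fibre over x. Points beyond the rightmost point of the shadow, where the fibre is a
  single point, are cut off by the disc constructed there; degenerate cases are covered by the
  unit discs centred on the axis below points of A, and the other positions by reflection in the
  two axes. Finally, a set from which every outside point is separated by a unit ball is an
  intersection of unit balls.
\<close>

section \<open>Ball bodies and linear isometries\<close>

definition ball_separable :: "'a::metric_space set \<Rightarrow> 'a \<Rightarrow> bool" where
  "ball_separable S p \<longleftrightarrow> (\<exists>c. S \<subseteq> cball c 1 \<and> p \<notin> cball c 1)"

lemma ball_bodies_if_separable:
  assumes "\<And>p. p \<notin> S \<Longrightarrow> ball_separable S p"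
  shows "S \<in> ball_bodies"
proof -
  have "S = (\<Inter>c\<in>{c. S \<subseteq> cball c 1}. cball c 1)"
    using assms unfolding ball_separable_def by blast
  then show ?thesis
    unfolding ball_bodies_def by blast
qed

lemma ball_body_eq_Inter_enclosing:
  assumes "K \<in> ball_bodies"
  shows "K = (\<Inter>c\<in>{c. K \<subseteq> cball c 1}. cball c 1)"
  using assms unfolding ball_bodies_def by blast

lemma compact_enclosing_centres:
  assumes "(K::'a::euclidean_space set) \<noteq> {}"
  shows "compact {c. K \<subseteq> cball c 1}"
proof -
  obtain k where "k \<in> K"
    using assms by blast
  have "{c. K \<subseteq> cball c 1} = (\<Inter>k\<in>K. cball k 1)"
    by (auto simp: dist_commute)
  moreover have "(\<Inter>k\<in>K. cball k 1) \<subseteq> cball k 1"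
    using \<open>k \<in> K\<close> by blast
  ultimately show ?thesis
    by (metis bounded_cball bounded_subset closed_INT closed_cball compact_eq_bounded_closed)
qed

lemma enclosing_centres_nonempty:
  assumes "K \<in> ball_bodies" and "bounded K"
  shows "{c. K \<subseteq> cball c 1} \<noteq> {}"
proof
  assume "{c. K \<subseteq> cball c 1} = {}"
  then have "K = UNIV"
    using ball_body_eq_Inter_enclosing[OF assms(1)] by simp
  then show False
    using \<open>bounded K\<close> not_bounded_UNIV by metis
qed

definition linear_isometry :: "('a::real_inner \<Rightarrow> 'b::real_inner) \<Rightarrow> bool" where
  "linear_isometry f \<longleftrightarrow> linear f \<and> (\<forall>x y. f x \<bullet> f y = x \<bullet> y)"

lemma linear_isometry_norm:
  assumes "linear_isometry f"
  shows "norm (f x) = norm x"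
  using assms unfolding linear_isometry_def by (simp add: norm_eq_sqrt_inner)

lemma linear_isometry_dist:
  assumes "linear_isometry f"
  shows "dist (f x) (f y) = dist x y"
proof -
  have "f x - f y = f (x - y)"
    using assms unfolding linear_isometry_def by (simp add: linear_diff)
  then show ?thesis
    by (simp add: dist_norm linear_isometry_norm[OF assms])
qed

lemma linear_isometry_inj:
  "linear_isometry f \<Longrightarrow> inj f"
  by (metis injI linear_isometry_dist dist_eq_0_iff)

lemma linear_isometry_image_cball:
  assumes "linear_isometry f" and "surj f"
  shows "f ` cball c r = cball (f c) r"
proof -
  have "cball (f c) r = f ` {x. f x \<in> cball (f c) r}"
    using \<open>surj f\<close> by (metis surj_image_vimage_eq vimage_def)
  then show ?thesis
    using linear_isometry_dist[OF assms(1)] by (auto simp: mem_cball)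
qed

lemma ball_separable_linear_isometry_image:
  assumes "linear_isometry f" and "surj f" and "ball_separable S p"
  shows "ball_separable (f ` S) (f p)"
proof -
  obtain c where "S \<subseteq> cball c 1" and "p \<notin> cball c 1"
    using assms(3) unfolding ball_separable_def by blast
  then have "f ` S \<subseteq> f ` cball c 1" and "f p \<notin> f ` cball c 1"
    using linear_isometry_inj[OF assms(1)] by (auto simp: inj_image_mem_iff)
  then show ?thesis
    unfolding ball_separable_def linear_isometry_image_cball[OF assms(1,2)] by blast
qed

lemma ball_bodies_linear_isometry_image_iff:
  fixes f :: "'a::euclidean_space \<Rightarrow> 'b::euclidean_space"
  assumes "linear_isometry f" and "surj f"
  shows "f ` K \<in> ball_bodies \<longleftrightarrow> K \<in> ball_bodies"
proof
  assume "f ` K \<in> ball_bodies"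
  then obtain C where C: "f ` K = (\<Inter>c\<in>C. cball c 1)"
    unfolding ball_bodies_def by blast
  have "x \<in> K \<longleftrightarrow> (\<forall>b\<in>f -` C. x \<in> cball b 1)" for x
  proof -
    have "x \<in> K \<longleftrightarrow> f x \<in> f ` K"
      using linear_isometry_inj[OF assms(1)] by (simp add: inj_image_mem_iff)
    also have "\<dots> \<longleftrightarrow> (\<forall>b. f b \<in> C \<longrightarrow> dist (f b) (f x) \<le> 1)"
      using \<open>surj f\<close> unfolding C by (auto simp: mem_cball) (metis surjD)
    finally show ?thesis
      by (auto simp: linear_isometry_dist[OF assms(1)])
  qed
  then have "K = (\<Inter>b\<in>f -` C. cball b 1)"
    by blast
  then show "K \<in> ball_bodies"
    unfolding ball_bodies_def by blast
next
  assume "K \<in> ball_bodies"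
  then obtain C where "K = (\<Inter>c\<in>C. cball c 1)"
    unfolding ball_bodies_def by blast
  then have "f ` K = (\<Inter>c\<in>C. f ` cball c 1)"
    using linear_isometry_inj[OF assms(1)] \<open>surj f\<close> by (simp add: bij_image_INT bij_def)
  also have "\<dots> = (\<Inter>c\<in>f ` C. cball c 1)"
    by (simp add: linear_isometry_image_cball[OF assms])
  finally show "f ` K \<in> ball_bodies"
    unfolding ball_bodies_def by blast
qed

lemma bounded_linear_isometry_image_iff:
  assumes "linear_isometry f"
  shows "bounded (f ` K) \<longleftrightarrow> bounded K"
  by (simp add: bounded_iff linear_isometry_norm[OF assms])

lemma steiner_symmetral_linear_isometry_image:
  assumes "linear_isometry f"
  shows "steiner_symmetral (f u) (f ` K) = f ` steiner_symmetral u K"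
proof -
  have lin: "linear f" and inner: "\<And>x y. f x \<bullet> f y = x \<bullet> y"
    using assms unfolding linear_isometry_def by auto
  have step: "f x + t *\<^sub>R f u = f (x + t *\<^sub>R u)" for x t
    using lin by (simp add: linear_add linear_scale)
  have proj: "proj_perp (f u) (f k) = f (proj_perp u k)" for k
    using lin unfolding proj_perp_def by (simp add: inner linear_diff linear_scale)
  have chord: "{t. f (x + t *\<^sub>R u) \<in> f ` K} = {t. x + t *\<^sub>R u \<in> K}" for x
    using linear_isometry_inj[OF assms] by (simp add: inj_image_mem_iff)
  have proj_image: "proj_perp (f u) ` f ` K = f ` proj_perp u ` K"
    by (auto simp: proj image_iff)
  have reindex: "\<And>P Q. {x + y *\<^sub>R f u | x y. x \<in> f ` P \<and> Q x y} =
      {f x + y *\<^sub>R f u | x y. x \<in> P \<and> Q (f x) y}"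
    by blast
  have image_compr: "\<And>g P. f ` {g x y | x y. P x y} = {f (g x y) | x y. P x y}"
    by blast
  have "steiner_symmetral (f u) (f ` K) =
      {f x + y *\<^sub>R f u | x y. x \<in> proj_perp u ` K \<and>
         \<bar>y\<bar> \<le> \<bar>Sup {t. f x + t *\<^sub>R f u \<in> f ` K} - Inf {t. f x + t *\<^sub>R f u \<in> f ` K}\<bar> / 2}"
    unfolding steiner_symmetral_def sec_hi_def sec_lo_def proj_image by (rule reindex)
  also have "\<dots> = f ` steiner_symmetral u K"
    unfolding step chord steiner_symmetral_def sec_hi_def sec_lo_def
    by (rule image_compr[symmetric])
  finally show ?thesis .
qed

lemma ball_separable_linear_involution_iff:
  assumes "linear_isometry f" and "\<And>x. f (f x) = x"
  shows "ball_separable (f ` S) (f p) \<longleftrightarrow> ball_separable S p"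
proof
  have "surj f"
    using surjI[of f f] assms(2) by blast
  show "ball_separable S p" if "ball_separable (f ` S) (f p)"
    using ball_separable_linear_isometry_image[OF assms(1) \<open>surj f\<close> that]
    by (simp add: image_image assms(2))
  show "ball_separable (f ` S) (f p)" if "ball_separable S p"
    using ball_separable_linear_isometry_image[OF assms(1) \<open>surj f\<close> that] .
qed

lemma linear_isometry_reflect_fst: "linear_isometry (\<lambda>p :: real \<times> real. (- fst p, snd p))"
  unfolding linear_isometry_def by (auto simp: linear_iff inner_prod_def)

lemma linear_isometry_reflect_snd: "linear_isometry (\<lambda>p :: real \<times> real. (fst p, - snd p))"
  unfolding linear_isometry_def by (auto simp: linear_iff inner_prod_def)

section \<open>Unit semicircles\<close>

definition semicircle :: "real \<Rightarrow> real \<Rightarrow> real" where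
  "semicircle a x = sqrt (1 - (x - a)\<^sup>2)"

definition semicircle_slope :: "real \<Rightarrow> real \<Rightarrow> real" where
  "semicircle_slope a x = (a - x) / semicircle a x"

lemma semicircle_pos: "\<bar>x - a\<bar> < 1 \<Longrightarrow> 0 < semicircle a x"
  unfolding semicircle_def by (simp add: abs_square_less_1)

lemma semicircle_square: "\<bar>x - a\<bar> \<le> 1 \<Longrightarrow> (semicircle a x)\<^sup>2 = 1 - (x - a)\<^sup>2"
  unfolding semicircle_def by (simp add: abs_square_le_1)

lemma continuous_on_semicircle [continuous_intros]:
  "continuous_on S f \<Longrightarrow> continuous_on S g \<Longrightarrow> continuous_on S (\<lambda>x. semicircle (f x) (g x))"
  unfolding semicircle_def by (intro continuous_intros)

lemma has_real_derivative_semicircle: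
  assumes "\<bar>x - a\<bar> < 1"
  shows "(semicircle a has_real_derivative semicircle_slope a x) (at x)"
proof -
  have pos: "0 < 1 - (x - a)\<^sup>2"
    using assms by (simp add: abs_square_less_1)
  have "((\<lambda>x. sqrt (1 - (x - a)\<^sup>2)) has_real_derivative
      inverse (sqrt (1 - (x - a)\<^sup>2)) / 2 * (- (2 * (x - a)))) (at x)"
    using pos by (auto intro!: derivative_eq_intros)
  then show ?thesis
    unfolding semicircle_slope_def semicircle_def[abs_def]
    by (rule DERIV_cong) (use pos in \<open>simp add: field_simps\<close>)
qed

lemma has_real_derivative_semicircle_slope:
  assumes "\<bar>x - a\<bar> < 1"
  shows "(semicircle_slope a has_real_derivative - 1 / (semicircle a x)^3) (at x)"
proof -
  have R: "0 < semicircle a x"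
    using semicircle_pos[OF assms] .
  have "((\<lambda>x. (a - x) / semicircle a x) has_real_derivative
      ((-1) * semicircle a x - (a - x) * semicircle_slope a x)
        / (semicircle a x * semicircle a x)) (at x)"
    using R by (auto intro!: derivative_eq_intros has_real_derivative_semicircle assms)
  moreover have "((-1) * semicircle a x - (a - x) * semicircle_slope a x)
      / (semicircle a x * semicircle a x) = - 1 / (semicircle a x)^3"
    using R semicircle_square[of x a] assms
    by (simp add: semicircle_slope_def field_simps power2_eq_square power3_eq_cube)
  ultimately show ?thesis
    unfolding semicircle_slope_def[abs_def] by simp
qed

lemma one_plus_semicircle_slope_square:
  assumes "\<bar>x - a\<bar> < 1"
  shows "1 + (semicircle_slope a x)\<^sup>2 = (1 / semicircle a x)\<^sup>2"
  using semicircle_pos[OF assms] semicircle_square[of x a] assms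
  by (simp add: semicircle_slope_def field_simps power2_eq_square)

lemma dist_Pair_eq_sqrt:
  fixes x y :: real
  shows "dist e (x, y) = sqrt ((x - fst e)\<^sup>2 + (y - snd e)\<^sup>2)"
  by (cases e) (simp add: dist_Pair_Pair dist_real_def power2_commute)

lemma mem_cball_Pair_iff:
  fixes x y :: real
  shows "(x, y) \<in> cball e 1 \<longleftrightarrow> (x - fst e)\<^sup>2 + (y - snd e)\<^sup>2 \<le> 1"
  by (simp add: mem_cball dist_Pair_eq_sqrt)

lemma abs_le_1_if_mem_cball:
  fixes x y :: real
  assumes "(x, y) \<in> cball e 1"
  shows "\<bar>x - fst e\<bar> \<le> 1"
proof -
  have "(x - fst e)\<^sup>2 + (y - snd e)\<^sup>2 \<le> 1"
    using assms by (simp only: mem_cball_Pair_iff)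
  then have "(x - fst e)\<^sup>2 \<le> 1"
    using zero_le_power2[of "y - snd e"] by linarith
  then show ?thesis
    by (simp add: abs_square_le_1)
qed

lemma mem_cball_iff_semicircle:
  fixes x y :: real
  assumes "\<bar>x - fst e\<bar> \<le> 1"
  shows "(x, y) \<in> cball e 1 \<longleftrightarrow> snd e - semicircle (fst e) x \<le> y \<and> y \<le> snd e + semicircle (fst e) x"
proof -
  have "(x, y) \<in> cball e 1 \<longleftrightarrow> (y - snd e)\<^sup>2 \<le> (semicircle (fst e) x)\<^sup>2"
    unfolding mem_cball_Pair_iff semicircle_square[OF assms] by linarith
  also have "\<dots> \<longleftrightarrow> \<bar>y - snd e\<bar> \<le> \<bar>semicircle (fst e) x\<bar>"
    by (rule abs_le_square_iff[symmetric])
  also have "\<dots> \<longleftrightarrow> \<bar>y - snd e\<bar> \<le> semicircle (fst e) x"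
    using assms by (simp add: semicircle_def abs_square_le_1)
  finally show ?thesis
    by linarith
qed

section \<open>Graphs of curvature at least one\<close>

lemma abs_sin_arctan_less_1: "\<bar>sin (arctan p)\<bar> < 1"
proof -
  have "(sin (arctan p))\<^sup>2 < 1"
    using cos_arctan_not_zero[of p] by (simp add: sin_squared_eq)
  then show ?thesis
    by (simp add: abs_square_less_1)
qed

lemma le_div_sqrt_if_sin_arctan_le:
  fixes p w :: real
  assumes "sin (arctan p) \<le> w" and "\<bar>w\<bar> < 1"
  shows "p \<le> w / sqrt (1 - w\<^sup>2)"
proof -
  have w: "-1 < w" "w < 1"
    using assms(2) by auto
  have "sin (arctan p) \<le> sin (arcsin w)"
    using assms w by simp
  then have "arctan p \<le> arcsin w"
    using arctan_bounded[of p] arcsin_bounded[of w] w by (subst (asm) sin_mono_le_eq) auto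
  also have "\<dots> = arctan (tan (arcsin w))"
    using arcsin_lt_bounded[of w] w by (simp add: arctan_tan)
  finally have "p \<le> tan (arcsin w)"
    by (simp add: arctan_le_iff)
  then show ?thesis
    using w by (simp add: tan_def cos_arcsin)
qed

lemma semicircle_tangent_centre: "semicircle (x + sin (arctan p)) x = cos (arctan p)"
proof -
  have "semicircle (x + sin (arctan p)) x = sqrt ((cos (arctan p))\<^sup>2)"
    unfolding semicircle_def by (simp add: cos_squared_eq)
  then show ?thesis
    by (simp add: cos_arctan)
qed

lemma semicircle_reflect: "semicircle (2 * c - a) (2 * c - x) = semicircle a x"
  unfolding semicircle_def by (simp add: power2_commute algebra_simps)

text \<open>
  With \<theta> = arctan (g' x1), the unit circle centred at (x1 + sin \<theta>, g x1 - cos \<theta>) touches the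
  graph of g from below at x1. The hypothesis that the abscissa of this centre does not increase
  as the point of contact moves to the right is the statement that the graph has curvature at
  least 1.
\<close>

lemma graph_below_tangent_circle_right:
  fixes g g' :: "real \<Rightarrow> real" and x1 x :: real
  defines "C \<equiv> x1 + sin (arctan (g' x1))"
  assumes "x1 < x" and cont: "continuous_on {x1..x} g"
    and deriv: "\<And>s. x1 \<le> s \<Longrightarrow> s < x \<Longrightarrow> (g has_real_derivative g' s) (at s)"
    and curv: "\<And>s. x1 \<le> s \<Longrightarrow> s < x \<Longrightarrow> s + sin (arctan (g' s)) \<le> C"
  shows "\<bar>x - C\<bar> \<le> 1" and "g x \<le> g x1 - cos (arctan (g' x1)) + semicircle C x"
proof -
  have lo: "C - 1 < x1"
    using abs_sin_arctan_less_1[of "g' x1"] unfolding C_def by linarith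
  have hi: "x \<le> C + 1"
  proof (rule ccontr)
    assume "\<not> x \<le> C + 1"
    then have "max x1 (C + 1) + sin (arctan (g' (max x1 (C + 1)))) \<le> C"
      using curv \<open>x1 < x\<close> by simp
    then show False
      using abs_sin_arctan_less_1[of "g' (max x1 (C + 1))"] by linarith
  qed
  then show "\<bar>x - C\<bar> \<le> 1"
    using lo \<open>x1 < x\<close> by linarith
  define k where "k s = g s - semicircle C s" for s
  have "k x \<le> k x1"
  proof (rule DERIV_nonpos_imp_decreasing_open[of x1 x k])
    show "continuous_on {x1..x} k"
      unfolding k_def by (intro continuous_intros cont)
    fix s assume s: "x1 < s" "s < x"
    then have sC: "\<bar>C - s\<bar> < 1" "\<bar>s - C\<bar> < 1"
      using lo hi by auto
    have "(k has_real_derivative g' s - semicircle_slope C s) (at s)"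
      unfolding k_def[abs_def]
      using s by (intro derivative_intros deriv has_real_derivative_semicircle sC) auto
    moreover have "g' s \<le> semicircle_slope C s"
      using le_div_sqrt_if_sin_arctan_le[OF _ sC(1)] curv[of s] s
      by (simp add: semicircle_slope_def semicircle_def power2_commute)
    ultimately show "\<exists>y. (k has_real_derivative y) (at s) \<and> y \<le> 0"
      by (intro exI[of _ "g' s - semicircle_slope C s"]) simp
  qed (use \<open>x1 < x\<close> in simp)
  moreover have "semicircle C x1 = cos (arctan (g' x1))"
    unfolding C_def by (rule semicircle_tangent_centre)
  ultimately show "g x \<le> g x1 - cos (arctan (g' x1)) + semicircle C x"
    unfolding k_def by simp
qed

lemma graph_below_tangent_circle:
  fixes g g' :: "real \<Rightarrow> real" and lo hi x1 x :: real
  defines "C \<equiv> x1 + sin (arctan (g' x1))"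
  assumes cont: "continuous_on {lo..hi} g"
    and deriv: "\<And>s. lo < s \<Longrightarrow> s < hi \<Longrightarrow> (g has_real_derivative g' s) (at s)"
    and curv: "\<And>s t. lo < s \<Longrightarrow> s \<le> t \<Longrightarrow> t < hi \<Longrightarrow>
      t + sin (arctan (g' t)) \<le> s + sin (arctan (g' s))"
    and x1: "lo < x1" "x1 < hi" and x: "lo \<le> x" "x \<le> hi"
  shows "\<bar>x - C\<bar> \<le> 1 \<and> g x \<le> g x1 - cos (arctan (g' x1)) + semicircle C x"
proof (cases x1 x rule: linorder_cases)
  case less
  have "continuous_on {x1..x} g"
    using cont by (rule continuous_on_subset) (use x1 x in auto)
  then show ?thesis
    unfolding C_def using x1 x less
    by (intro conjI graph_below_tangent_circle_right) (auto intro!: deriv curv)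
next
  case equal
  then show ?thesis
    unfolding C_def using abs_sin_arctan_less_1[of "g' x1"] by (simp add: semicircle_tangent_centre)
next
  case greater
  define h where "h s = g (2 * x1 - s)" for s
  define h' where "h' s = - g' (2 * x1 - s)" for s
  have "continuous_on {x1..2 * x1 - x} h"
    unfolding h_def using x1 x
    by (intro continuous_on_compose2[OF cont] continuous_intros) auto
  moreover have "(h has_real_derivative h' s) (at s)" if "x1 \<le> s" "s < 2 * x1 - x" for s
  proof -
    have "((\<lambda>s. g (2 * x1 - s)) has_real_derivative g' (2 * x1 - s) * (- 1)) (at s)"
      using that x1 x by (intro DERIV_chain2[OF deriv] derivative_eq_intros) auto
    then show ?thesis
      unfolding h_def[abs_def] h'_def by simp
  qed
  moreover have "s + sin (arctan (h' s)) \<le> x1 + sin (arctan (h' x1))"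
    if "x1 \<le> s" "s < 2 * x1 - x" for s
    using curv[of "2 * x1 - s" x1] that x1 x
    by (simp add: h'_def arctan_minus)
  ultimately have "\<bar>(2 * x1 - x) - (x1 + sin (arctan (h' x1)))\<bar> \<le> 1 \<and>
      h (2 * x1 - x) \<le>
        h x1 - cos (arctan (h' x1)) + semicircle (x1 + sin (arctan (h' x1))) (2 * x1 - x)"
    using greater by (intro conjI graph_below_tangent_circle_right) auto
  moreover have "semicircle (x1 + sin (arctan (h' x1))) (2 * x1 - x) = semicircle C x"
    using semicircle_reflect[of x1 C x] unfolding C_def h'_def by (simp add: arctan_minus)
  ultimately show ?thesis
    unfolding C_def h_def h'_def by (simp add: arctan_minus abs_minus_commute algebra_simps)
qed

section \<open>The mean of two unit semicircles\<close>

definition mean_arc :: "real \<Rightarrow> real \<Rightarrow> real \<Rightarrow> real" where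
  "mean_arc a1 a2 x = (semicircle a1 x + semicircle a2 x) / 2"

definition mean_slope :: "real \<Rightarrow> real \<Rightarrow> real \<Rightarrow> real" where
  "mean_slope a1 a2 x = (semicircle_slope a1 x + semicircle_slope a2 x) / 2"

lemma has_real_derivative_mean_arc:
  "\<bar>x - a1\<bar> < 1 \<Longrightarrow> \<bar>x - a2\<bar> < 1 \<Longrightarrow> (mean_arc a1 a2 has_real_derivative mean_slope a1 a2 x) (at x)"
  unfolding mean_arc_def[abs_def] mean_slope_def
  by (auto intro!: derivative_eq_intros has_real_derivative_semicircle)

lemma has_real_derivative_mean_slope:
  "\<bar>x - a1\<bar> < 1 \<Longrightarrow> \<bar>x - a2\<bar> < 1 \<Longrightarrow>
    (mean_slope a1 a2 has_real_derivative
      - ((1 / semicircle a1 x)^3 + (1 / semicircle a2 x)^3) / 2) (at x)"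
  unfolding mean_slope_def[abs_def]
  by (auto intro!: derivative_eq_intros has_real_derivative_semicircle_slope simp: power_one_over)

lemma power_mean_2_3:
  fixes A B Q :: real
  assumes "0 \<le> A" "0 \<le> B" "0 \<le> Q" "Q\<^sup>2 \<le> (A\<^sup>2 + B\<^sup>2) / 2"
  shows "Q^3 \<le> (A^3 + B^3) / 2"
proof -
  have "2 * (A^3 + B^3)\<^sup>2 - (A\<^sup>2 + B\<^sup>2)^3 = (A - B)\<^sup>2 * (A^4 + 2*A^3*B + 2*A*B^3 + B^4)"
    by algebra
  moreover have "0 \<le> (A - B)\<^sup>2 * (A^4 + 2*A^3*B + 2*A*B^3 + B^4)"
    using assms by (intro mult_nonneg_nonneg) auto
  ultimately have cubes: "(A\<^sup>2 + B\<^sup>2)^3 \<le> 2 * (A^3 + B^3)\<^sup>2"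
    by linarith
  have "(Q^3)\<^sup>2 = (Q\<^sup>2)^3"
    by (simp flip: power_mult add: mult.commute)
  also have "\<dots> \<le> ((A\<^sup>2 + B\<^sup>2) / 2)^3"
    using assms by (intro power_mono) auto
  also have "\<dots> \<le> ((A^3 + B^3) / 2)\<^sup>2"
    using cubes by (simp add: power_divide)
  finally show ?thesis
    by (rule power2_le_imp_le) (use assms in auto)
qed

lemma one_plus_mean_slope_square_le:
  assumes "\<bar>x - a1\<bar> < 1" "\<bar>x - a2\<bar> < 1"
  shows "1 + (mean_slope a1 a2 x)\<^sup>2 \<le> ((1 / semicircle a1 x)\<^sup>2 + (1 / semicircle a2 x)\<^sup>2) / 2"
  using one_plus_semicircle_slope_square[OF assms(1)] one_plus_semicircle_slope_square[OF assms(2)]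
    sum_squares_ge_zero[of 0 "semicircle_slope a1 x - semicircle_slope a2 x"]
  unfolding mean_slope_def by (simp add: power2_eq_square field_simps)

lemma mean_arc_tangent_centre_deriv_nonpos:
  assumes "\<bar>x - a1\<bar> < 1" "\<bar>x - a2\<bar> < 1"
  shows "\<exists>D. ((\<lambda>s. s + sin (arctan (mean_slope a1 a2 s))) has_real_derivative D) (at x) \<and> D \<le> 0"
proof -
  define A where "A = 1 / semicircle a1 x"
  define B where "B = 1 / semicircle a2 x"
  define P where "P = mean_slope a1 a2 x"
  define Q where "Q = sqrt (1 + P\<^sup>2)"
  have pos: "0 < A" "0 < B" "0 < Q"
    using semicircle_pos assms unfolding A_def B_def Q_def by (auto simp: add_pos_nonneg)
  have "Q\<^sup>2 \<le> (A\<^sup>2 + B\<^sup>2) / 2"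
    using one_plus_mean_slope_square_le[OF assms] unfolding Q_def P_def A_def B_def by simp
  then have "Q^3 \<le> (A^3 + B^3) / 2"
    using pos by (intro power_mean_2_3) auto
  moreover have "cos (arctan P) * inverse (1 + P\<^sup>2) = 1 / Q^3"
    unfolding cos_arctan Q_def by (simp add: power3_eq_cube add_nonneg_nonneg field_simps)
  then have "cos (arctan P) * (inverse (1 + P\<^sup>2) * (- (A^3 + B^3) / 2)) = - ((A^3 + B^3) / 2) / Q^3"
    by (simp only: mult.assoc[symmetric]) (simp add: minus_divide_left)
  ultimately have bound: "cos (arctan P) * (inverse (1 + P\<^sup>2) * (- (A^3 + B^3) / 2)) \<le> -1"
    using pos by (simp add: divide_le_eq)
  have "((\<lambda>s. s + sin (arctan (mean_slope a1 a2 s))) has_real_derivative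
      1 + cos (arctan P) * (inverse (1 + P\<^sup>2) * (- (A^3 + B^3) / 2))) (at x)"
    using has_real_derivative_mean_slope[OF assms] unfolding P_def A_def B_def
    by (auto intro!: derivative_eq_intros)
  then show ?thesis
    using bound by (intro exI[where x = "1 + _"]) auto
qed

lemma mean_arc_below_tangent_circle:
  fixes a1 a2 x1 x :: real
  defines "\<theta> \<equiv> arctan (mean_slope a1 a2 x1)"
  assumes "\<bar>x1 - a1\<bar> < 1" "\<bar>x1 - a2\<bar> < 1" "\<bar>x - a1\<bar> \<le> 1" "\<bar>x - a2\<bar> \<le> 1"
  shows "\<bar>x - (x1 + sin \<theta>)\<bar> \<le> 1 \<and>
    mean_arc a1 a2 x \<le> mean_arc a1 a2 x1 - cos \<theta> + semicircle (x1 + sin \<theta>) x"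
  unfolding \<theta>_def
proof (rule graph_below_tangent_circle[where lo = "max a1 a2 - 1" and hi = "min a1 a2 + 1"])
  show "continuous_on {max a1 a2 - 1..min a1 a2 + 1} (mean_arc a1 a2)"
    unfolding mean_arc_def by (intro continuous_intros) auto
  show "(mean_arc a1 a2 has_real_derivative mean_slope a1 a2 s) (at s)"
    if "max a1 a2 - 1 < s" "s < min a1 a2 + 1" for s
    using that by (intro has_real_derivative_mean_arc) auto
  show "t + sin (arctan (mean_slope a1 a2 t)) \<le> s + sin (arctan (mean_slope a1 a2 s))"
    if "max a1 a2 - 1 < s" "s \<le> t" "t < min a1 a2 + 1" for s t
  proof -
    have "\<exists>D. ((\<lambda>s. s + sin (arctan (mean_slope a1 a2 s))) has_real_derivative D) (at r) \<and> D \<le> 0"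
      if "s \<le> r" "r \<le> t" for r
      using that \<open>max a1 a2 - 1 < s\<close> \<open>t < min a1 a2 + 1\<close>
      by (intro mean_arc_tangent_centre_deriv_nonpos) auto
    from DERIV_nonpos_imp_nonincreasing[OF \<open>s \<le> t\<close> this] show ?thesis
      by simp
  qed
qed (use assms in auto)

definition half_gap :: "real \<times> real \<Rightarrow> real \<times> real \<Rightarrow> real \<Rightarrow> real" where
  "half_gap c d x = ((snd c + semicircle (fst c) x) - (snd d - semicircle (fst d) x)) / 2"

lemma half_gap_eq_mean_arc: "half_gap c d x = (snd c - snd d) / 2 + mean_arc (fst c) (fst d) x"
  unfolding half_gap_def mean_arc_def by (simp add: field_simps)

lemma has_real_derivative_half_gap:
  "\<bar>x - fst c\<bar> < 1 \<Longrightarrow> \<bar>x - fst d\<bar> < 1 \<Longrightarrow>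
    (half_gap c d has_real_derivative mean_slope (fst c) (fst d) x) (at x)"
  unfolding half_gap_eq_mean_arc[abs_def]
  by (auto intro!: derivative_eq_intros has_real_derivative_mean_arc)

lemma half_gap_le_cos_arctan_mean_slope:
  fixes x :: real
  assumes c: "\<bar>x - fst c\<bar> < 1" and d: "\<bar>x - fst d\<bar> < 1" and "0 \<le> half_gap c d x"
    and top: "(x, snd c + semicircle (fst c) x) \<in> cball d 1"
    and bot: "(x, snd d - semicircle (fst d) x) \<in> cball c 1"
  shows "half_gap c d x \<le> cos (arctan (mean_slope (fst c) (fst d) x))"
proof -
  define s where "s = half_gap c d x"
  define P where "P = mean_slope (fst c) (fst d) x"
  have Rc: "0 < semicircle (fst c) x" and Rd: "0 < semicircle (fst d) x"
    using semicircle_pos c d by auto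
  have "snd c - semicircle (fst c) x \<le> snd d - semicircle (fst d) x"
    using bot mem_cball_iff_semicircle[OF less_imp_le[OF c]] by blast
  then have "s \<le> semicircle (fst c) x"
    unfolding s_def half_gap_def by (simp add: field_simps)
  have "snd c + semicircle (fst c) x \<le> snd d + semicircle (fst d) x"
    using top mem_cball_iff_semicircle[OF less_imp_le[OF d]] by blast
  then have "s \<le> semicircle (fst d) x"
    unfolding s_def half_gap_def by (simp add: field_simps)
  with \<open>s \<le> semicircle (fst c) x\<close>
  have sc: "(s / semicircle (fst c) x)\<^sup>2 \<le> 1" and sd: "(s / semicircle (fst d) x)\<^sup>2 \<le> 1"
    using Rc Rd \<open>0 \<le> half_gap c d x\<close> unfolding s_def by (auto simp: abs_square_le_1)
  have "(s * sqrt (1 + P\<^sup>2))\<^sup>2 = s\<^sup>2 * (1 + P\<^sup>2)"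
    by (simp add: power_mult_distrib add_nonneg_nonneg)
  also have "\<dots> \<le> s\<^sup>2 * (((1 / semicircle (fst c) x)\<^sup>2 + (1 / semicircle (fst d) x)\<^sup>2) / 2)"
    unfolding P_def using one_plus_mean_slope_square_le c d by (intro mult_left_mono) auto
  also have "\<dots> = ((s / semicircle (fst c) x)\<^sup>2 + (s / semicircle (fst d) x)\<^sup>2) / 2"
    by (simp add: power_divide field_simps)
  also have "\<dots> \<le> 1\<^sup>2"
    using sc sd by simp
  finally have "(s * sqrt (1 + P\<^sup>2))\<^sup>2 \<le> 1\<^sup>2" .
  then have "s * sqrt (1 + P\<^sup>2) \<le> 1"
    by (rule power2_le_imp_le) simp
  then show ?thesis
    unfolding s_def[symmetric] P_def[symmetric] cos_arctan
    by (simp add: le_divide_eq add_pos_nonneg)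
qed

section \<open>Intersections of unit discs in the plane\<close>

definition fibre :: "('a \<times> 'b) set \<Rightarrow> 'a \<Rightarrow> 'b set" where
  "fibre L x = {y. (x, y) \<in> L}"

definition half_width :: "(real \<times> real) set \<Rightarrow> real \<Rightarrow> real" where
  "half_width L x = \<bar>Sup (fibre L x) - Inf (fibre L x)\<bar> / 2"

lemma mem_steiner_symmetral_vertical:
  "(x, y) \<in> steiner_symmetral (0, 1) L \<longleftrightarrow> x \<in> fst ` L \<and> \<bar>y\<bar> \<le> half_width L x"
proof -
  have proj: "proj_perp (0, 1) ` L = (\<lambda>a. (a, 0)) ` fst ` L"
    by (force simp: proj_perp_def image_iff)
  have line: "{t. (a, 0) + t *\<^sub>R (0, 1) \<in> L} = fibre L a" for a :: real
    by (simp add: fibre_def)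
  have reindex: "\<And>P Q. {p + t *\<^sub>R (0, 1) | p t. p \<in> (\<lambda>a. (a, 0)) ` P \<and> Q p t} =
      {(a, 0) + t *\<^sub>R (0, 1) | a t. a \<in> P \<and> Q (a, 0) t}"
    by blast
  have "steiner_symmetral (0, 1) L = {(a, t) | a t. a \<in> fst ` L \<and> \<bar>t\<bar> \<le> half_width L a}"
    unfolding steiner_symmetral_def sec_hi_def sec_lo_def proj reindex line half_width_def
    by simp
  then show ?thesis
    by simp
qed

lemma has_real_derivative_nonpos_at_right_minimum:
  fixes f :: "real \<Rightarrow> real"
  assumes "(f has_real_derivative D) (at b)" and "a < b" and "\<And>t. a \<le> t \<Longrightarrow> t \<le> b \<Longrightarrow> f b \<le> f t"
  shows "D \<le> 0"
proof (rule ccontr)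
  assume "\<not> D \<le> 0"
  then obtain \<delta> where "0 < \<delta>" and dec: "\<forall>h>0. h < \<delta> \<longrightarrow> f (b - h) < f b"
    using DERIV_pos_inc_left[OF assms(1)] by auto
  define h where "h = min (\<delta> / 2) (b - a)"
  have "0 < h" "h < \<delta>" "h \<le> b - a"
    unfolding h_def using \<open>0 < \<delta>\<close> \<open>a < b\<close> by auto
  then have "f (b - h) < f b"
    using dec by blast
  moreover have "f b \<le> f (b - h)"
    using \<open>0 < h\<close> \<open>h \<le> b - a\<close> by (intro assms(3)) auto
  ultimately show False
    by linarith
qed

locale unit_disc_intersection =
  fixes A L :: "(real \<times> real) set"
  assumes compact_centres: "compact A" and centres_nonempty: "A \<noteq> {}"
    and L_eq: "L = (\<Inter>e\<in>A. cball e 1)" and L_nonempty: "L \<noteq> {}"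
begin

abbreviation symmetral :: "(real \<times> real) set" where
  "symmetral \<equiv> steiner_symmetral (0, 1) L"

lemma shadow_near_centres:
  assumes "x \<in> fst ` L" and "e \<in> A"
  shows "\<bar>x - fst e\<bar> \<le> 1"
proof -
  obtain y where "(x, y) \<in> cball e 1"
    using assms unfolding L_eq by force
  then show ?thesis
    by (rule abs_le_1_if_mem_cball)
qed

lemma fibre_between_arcs:
  assumes "y \<in> fibre L x" and "e \<in> A"
  shows "snd e - semicircle (fst e) x \<le> y \<and> y \<le> snd e + semicircle (fst e) x"
proof -
  have "(x, y) \<in> cball e 1"
    using assms unfolding fibre_def L_eq by blast
  moreover have "\<bar>x - fst e\<bar> \<le> 1"
    using calculation by (rule abs_le_1_if_mem_cball)
  ultimately show ?thesis
    by (metis mem_cball_iff_semicircle)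
qed

lemma half_width_le_half_gap:
  assumes "x \<in> fst ` L" and "c \<in> A" and "d \<in> A"
  shows "half_width L x \<le> half_gap c d x"
proof -
  have ne: "fibre L x \<noteq> {}"
    using assms(1) unfolding fibre_def by force
  have up: "y \<le> snd c + semicircle (fst c) x" and lo: "snd d - semicircle (fst d) x \<le> y"
    if "y \<in> fibre L x" for y
    using fibre_between_arcs[OF that] assms by auto
  have "bdd_above (fibre L x)"
    using up by (rule bdd_aboveI)
  moreover have "bdd_below (fibre L x)"
    using lo by (rule bdd_belowI)
  ultimately have "Inf (fibre L x) \<le> Sup (fibre L x)"
    using ne by (intro cInf_le_cSup)
  moreover have "Sup (fibre L x) \<le> snd c + semicircle (fst c) x"
    using ne up by (rule cSup_least)
  moreover have "snd d - semicircle (fst d) x \<le> Inf (fibre L x)"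
    using ne lo by (rule cInf_greatest)
  ultimately show ?thesis
    unfolding half_width_def half_gap_def by simp
qed

lemma symmetral_subset_axis_disc:
  assumes "e \<in> A"
  shows "symmetral \<subseteq> cball (fst e, 0) 1"
proof safe
  fix x y assume "(x, y) \<in> symmetral"
  then have x: "x \<in> fst ` L" and "\<bar>y\<bar> \<le> half_width L x"
    by (auto simp: mem_steiner_symmetral_vertical)
  then have "\<bar>y\<bar> \<le> semicircle (fst e) x"
    using half_width_le_half_gap[OF x assms assms] by (simp add: half_gap_def)
  then show "(x, y) \<in> cball (fst e, 0) 1"
    using mem_cball_iff_semicircle[of x "(fst e, 0)" y] shadow_near_centres[OF x assms]
    by (auto simp: abs_le_iff)
qed

lemma ball_separable_by_axis_disc:
  assumes "e \<in> A" and "1 < (x - fst e)\<^sup>2 + y\<^sup>2"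
  shows "ball_separable symmetral (x, y)"
  unfolding ball_separable_def
proof (intro exI conjI)
  show "symmetral \<subseteq> cball (fst e, 0) 1"
    using assms(1) by (rule symmetral_subset_axis_disc)
  show "(x, y) \<notin> cball (fst e, 0) 1"
    unfolding mem_cball_Pair_iff using assms(2) by simp
qed

lemma fibre_eq_extremal_arcs:
  assumes "x \<in> fst ` L"
  obtains c d where "c \<in> A" and "d \<in> A"
    and "fibre L x = {snd d - semicircle (fst d) x .. snd c + semicircle (fst c) x}"
proof -
  define up lo where "up e = snd e + semicircle (fst e) x" and "lo e = snd e - semicircle (fst e) x"
    for e :: "real \<times> real"
  have "continuous_on A up" "continuous_on A lo"
    unfolding up_def[abs_def] lo_def[abs_def] by (intro continuous_intros)+
  then obtain c d where "c \<in> A" "d \<in> A" and extremal: "\<And>e. e \<in> A \<Longrightarrow> up c \<le> up e \<and> lo e \<le> lo d"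
    using continuous_attains_inf[OF compact_centres centres_nonempty]
      continuous_attains_sup[OF compact_centres centres_nonempty] by meson
  have "y \<in> fibre L x \<longleftrightarrow> (\<forall>e\<in>A. lo e \<le> y \<and> y \<le> up e)" for y
    using mem_cball_iff_semicircle[OF shadow_near_centres[OF assms]]
    unfolding fibre_def L_eq up_def lo_def by blast
  also have "\<dots> y \<longleftrightarrow> lo d \<le> y \<and> y \<le> up c" for y
    using extremal \<open>c \<in> A\<close> \<open>d \<in> A\<close> by (meson order_trans)
  finally show ?thesis
    using that \<open>c \<in> A\<close> \<open>d \<in> A\<close> unfolding up_def lo_def by (simp add: set_eq_iff)
qed

lemma half_width_eq_half_gap:
  assumes "x \<in> fst ` L"
    and "fibre L x = {snd d - semicircle (fst d) x .. snd c + semicircle (fst c) x}"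
  shows "0 \<le> half_gap c d x" and "half_width L x = half_gap c d x"
proof -
  have "fibre L x \<noteq> {}"
    using assms(1) unfolding fibre_def by force
  then show "0 \<le> half_gap c d x"
    unfolding assms(2) half_gap_def by simp
  then show "half_width L x = half_gap c d x"
    unfolding half_width_def assms(2) half_gap_def by simp
qed

text \<open>
  The bound half_gap c d x1 \<le> cos \<theta> puts the centre of the tangent disc on or below the axis,
  so the disc contains the lower boundary of the symmetral along with the upper one.
\<close>

lemma tangent_disc_contains_symmetral:
  fixes x1 :: real and c d :: "real \<times> real"
  defines "\<theta> \<equiv> arctan (mean_slope (fst c) (fst d) x1)"
  assumes c: "c \<in> A" "\<bar>x1 - fst c\<bar> < 1" and d: "d \<in> A" "\<bar>x1 - fst d\<bar> < 1"
    and x1: "x1 \<in> fst ` L"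
    and fib: "fibre L x1 = {snd d - semicircle (fst d) x1 .. snd c + semicircle (fst c) x1}"
  shows "symmetral \<subseteq> cball (x1 + sin \<theta>, half_gap c d x1 - cos \<theta>) 1"
proof safe
  fix x y assume "(x, y) \<in> symmetral"
  then have x: "x \<in> fst ` L" and y: "\<bar>y\<bar> \<le> half_width L x"
    by (auto simp: mem_steiner_symmetral_vertical)
  have "\<bar>x - fst c\<bar> \<le> 1" "\<bar>x - fst d\<bar> \<le> 1"
    using shadow_near_centres x c d by auto
  then have tangent: "\<bar>x - (x1 + sin \<theta>)\<bar> \<le> 1"
    "mean_arc (fst c) (fst d) x \<le> mean_arc (fst c) (fst d) x1 - cos \<theta> + semicircle (x1 + sin \<theta>) x"
    using mean_arc_below_tangent_circle c d unfolding \<theta>_def by auto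
  have "half_width L x \<le> half_gap c d x1 - cos \<theta> + semicircle (x1 + sin \<theta>) x"
    using half_width_le_half_gap[OF x c(1) d(1)] tangent(2) unfolding half_gap_eq_mean_arc by simp
  moreover have "half_gap c d x1 \<le> cos \<theta>"
    unfolding \<theta>_def
  proof (rule half_gap_le_cos_arctan_mean_slope)
    show "0 \<le> half_gap c d x1"
      using half_width_eq_half_gap[OF x1 fib] by simp
    then have "(x1, snd c + semicircle (fst c) x1) \<in> L" "(x1, snd d - semicircle (fst d) x1) \<in> L"
      using fib unfolding half_gap_def fibre_def set_eq_iff by auto
    then show "(x1, snd c + semicircle (fst c) x1) \<in> cball d 1"
      "(x1, snd d - semicircle (fst d) x1) \<in> cball c 1"
      using c d unfolding L_eq by auto
  qed (use c d in auto)
  ultimately show "(x, y) \<in> cball (x1 + sin \<theta>, half_gap c d x1 - cos \<theta>) 1"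
    using y mem_cball_iff_semicircle[of x "(x1 + sin \<theta>, half_gap c d x1 - cos \<theta>)" y] tangent(1)
    by (auto simp: abs_le_iff)
qed

lemma cball_subset_if_inside_all_balls:
  assumes "\<And>e. e \<in> A \<Longrightarrow> dist e p < 1"
  obtains \<epsilon> where "0 < \<epsilon>" and "cball p \<epsilon> \<subseteq> L"
proof -
  have "continuous_on A (\<lambda>e. dist e p)"
    by (intro continuous_intros)
  then obtain e0 where "e0 \<in> A" and far: "\<And>e. e \<in> A \<Longrightarrow> dist e p \<le> dist e0 p"
    using continuous_attains_sup[OF compact_centres centres_nonempty] by blast
  have "cball p (1 - dist e0 p) \<subseteq> L"
  proof
    fix q assume "q \<in> cball p (1 - dist e0 p)"
    then have "dist e q \<le> 1" if "e \<in> A" for e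
      using far[OF that] dist_triangle[of e q p] by (simp add: mem_cball)
    then show "q \<in> L"
      unfolding L_eq by simp
  qed
  moreover have "0 < 1 - dist e0 p"
    using assms \<open>e0 \<in> A\<close> by simp
  ultimately show ?thesis
    using that by blast
qed

lemma convex_shadow: "convex (fst ` L)"
  unfolding L_eq by (intro convex_linear_image linear_fst convex_INT) auto

lemma shadow_has_max: "\<exists>\<beta>\<in>fst ` L. \<forall>x\<in>fst ` L. x \<le> \<beta>"
proof -
  obtain e where "e \<in> A"
    using centres_nonempty by blast
  then have "bounded L"
    unfolding L_eq by (meson INF_lower bounded_cball bounded_subset)
  moreover have "closed L"
    unfolding L_eq by (intro closed_INT) auto
  ultimately have "compact (fst ` L)"
    by (intro compact_continuous_image continuous_intros) (simp add: compact_eq_bounded_closed)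
  then show ?thesis
    using compact_attains_sup L_nonempty by blast
qed

text \<open>
  Two points in the fibre over the rightmost point of the shadow would have a midpoint inside
  every open disc, hence in the interior of L.
\<close>

lemma half_width_at_shadow_max:
  assumes \<beta>: "\<beta> \<in> fst ` L" and max: "\<And>x. x \<in> fst ` L \<Longrightarrow> x \<le> \<beta>"
  shows "half_width L \<beta> = 0"
proof -
  obtain c d where "c \<in> A" "d \<in> A"
    and fib: "fibre L \<beta> = {snd d - semicircle (fst d) \<beta> .. snd c + semicircle (fst c) \<beta>}"
    using fibre_eq_extremal_arcs[OF \<beta>] by blast
  define lo up where "lo = snd d - semicircle (fst d) \<beta>" and "up = snd c + semicircle (fst c) \<beta>"
  have "up \<le> lo"
  proof (rule ccontr)
    assume "\<not> up \<le> lo"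
    then have lo_up: "lo \<in> fibre L \<beta>" "up \<in> fibre L \<beta>" "lo < (lo + up) / 2" "(lo + up) / 2 < up"
      using fib unfolding lo_def up_def by auto
    have "dist e (\<beta>, (lo + up) / 2) < 1" if "e \<in> A" for e
    proof -
      have "\<bar>(lo + up) / 2 - snd e\<bar> < semicircle (fst e) \<beta>"
        using fibre_between_arcs[OF lo_up(1) that] fibre_between_arcs[OF lo_up(2) that] lo_up(3,4)
        by (auto simp: abs_less_iff field_simps)
      then have "\<bar>(lo + up) / 2 - snd e\<bar>\<^sup>2 < (semicircle (fst e) \<beta>)\<^sup>2"
        by (intro power_strict_mono) auto
      then show ?thesis
        using semicircle_square[OF shadow_near_centres[OF \<beta> that]]
        by (simp add: dist_Pair_eq_sqrt)
    qed
    then obtain \<epsilon> where "0 < \<epsilon>" and "cball (\<beta>, (lo + up) / 2) \<epsilon> \<subseteq> L"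
      using cball_subset_if_inside_all_balls by blast
    then have "(\<beta> + \<epsilon>, (lo + up) / 2) \<in> L"
      by (auto simp: dist_Pair_Pair dist_real_def)
    then show False
      using max[of "\<beta> + \<epsilon>"] \<open>0 < \<epsilon>\<close> by force
  qed
  then show ?thesis
    using half_width_eq_half_gap[OF \<beta> fib] unfolding half_gap_def lo_def up_def by simp
qed

lemma shadow_interval:
  "a \<in> fst ` L \<Longrightarrow> b \<in> fst ` L \<Longrightarrow> a \<le> t \<Longrightarrow> t \<le> b \<Longrightarrow> t \<in> fst ` L"
  using convex_shadow mem_is_interval_1_I[of "fst ` L" a b t] is_interval_convex_1 by blast

lemma ball_separable_above_symmetral:
  assumes x0: "x0 \<in> fst ` L" and y0: "half_width L x0 < y0"
  shows "ball_separable symmetral (x0, y0)"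
proof -
  obtain c d where c: "c \<in> A" and d: "d \<in> A"
    and fib: "fibre L x0 = {snd d - semicircle (fst d) x0 .. snd c + semicircle (fst c) x0}"
    using fibre_eq_extremal_arcs[OF x0] by blast
  note H = half_width_eq_half_gap[OF x0 fib]
  show ?thesis
  proof (cases "\<bar>x0 - fst c\<bar> < 1 \<and> \<bar>x0 - fst d\<bar> < 1")
    case True
    define \<theta> where "\<theta> = arctan (mean_slope (fst c) (fst d) x0)"
    have "0 < cos \<theta>"
      unfolding \<theta>_def cos_arctan by (simp add: add_pos_nonneg)
    then have "(cos \<theta>)\<^sup>2 < (y0 - (half_gap c d x0 - cos \<theta>))\<^sup>2"
      using y0 H by (intro power_strict_mono) auto
    moreover have "(x0 - (x0 + sin \<theta>))\<^sup>2 = (sin \<theta>)\<^sup>2"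
      by simp
    ultimately have "(x0, y0) \<notin> cball (x0 + sin \<theta>, half_gap c d x0 - cos \<theta>) 1"
      unfolding mem_cball_Pair_iff fst_conv snd_conv using sin_cos_squared_add[of \<theta>] by linarith
    then show ?thesis
      using tangent_disc_contains_symmetral[OF c _ d _ x0 fib] True
      unfolding ball_separable_def \<theta>_def by blast
  next
    case False
    then obtain e where "e \<in> A" and "\<not> \<bar>x0 - fst e\<bar> < 1"
      using c d by blast
    then have "\<bar>x0 - fst e\<bar> = 1"
      using shadow_near_centres[OF x0] by fastforce
    then have "(x0 - fst e)\<^sup>2 = 1"
      by (metis power2_abs one_power2)
    moreover have "0 < y0\<^sup>2"
      using y0 H by simp
    ultimately show ?thesis
      using ball_separable_by_axis_disc[OF \<open>e \<in> A\<close>] by simp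
  qed
qed

lemma ball_separable_beyond_shadow_max:
  assumes \<beta>: "\<beta> \<in> fst ` L" and max: "\<And>x. x \<in> fst ` L \<Longrightarrow> x \<le> \<beta>"
    and x0: "\<beta> < x0" and y0: "0 \<le> y0"
  shows "ball_separable symmetral (x0, y0)"
proof -
  obtain c d where c: "c \<in> A" and d: "d \<in> A"
    and fib: "fibre L \<beta> = {snd d - semicircle (fst d) \<beta> .. snd c + semicircle (fst c) \<beta>}"
    using fibre_eq_extremal_arcs[OF \<beta>] by blast
  have H0: "half_width L \<beta> = 0" "half_gap c d \<beta> = 0"
    using half_width_at_shadow_max[OF \<beta> max] half_width_eq_half_gap[OF \<beta> fib] by auto
  show ?thesis
  proof (cases "\<exists>xl\<in>fst ` L. xl < \<beta>")
    case False
    then have point: "fst ` L = {\<beta>}"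
      using \<beta> max by (auto intro: antisym simp: not_less)
    have "symmetral \<subseteq> cball (\<beta> - 1, 0) 1"
    proof safe
      fix x y assume "(x, y) \<in> symmetral"
      then have "x = \<beta>" "y = 0"
        using H0(1) by (auto simp: mem_steiner_symmetral_vertical point)
      then show "(x, y) \<in> cball (\<beta> - 1, 0) 1"
        unfolding mem_cball_Pair_iff by simp
    qed
    moreover have "1 < (x0 - (\<beta> - 1))\<^sup>2"
      using x0 by (intro one_less_power) auto
    then have "(x0, y0) \<notin> cball (\<beta> - 1, 0) 1"
      using zero_le_power2[of y0]
      unfolding mem_cball_Pair_iff fst_conv snd_conv diff_0_right by linarith
    ultimately show ?thesis
      unfolding ball_separable_def by blast
  next
    case True
    then obtain xl where left: "xl \<in> fst ` L" "xl < \<beta>"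
      by blast
    show ?thesis
    proof (cases "\<bar>\<beta> - fst c\<bar> < 1 \<and> \<bar>\<beta> - fst d\<bar> < 1")
      case True
      define \<theta> where "\<theta> = arctan (mean_slope (fst c) (fst d) \<beta>)"
      have "mean_slope (fst c) (fst d) \<beta> \<le> 0"
      proof (rule has_real_derivative_nonpos_at_right_minimum)
        show "(half_gap c d has_real_derivative mean_slope (fst c) (fst d) \<beta>) (at \<beta>)"
          using True by (intro has_real_derivative_half_gap) auto
        show "half_gap c d \<beta> \<le> half_gap c d t" if "xl \<le> t" "t \<le> \<beta>" for t
        proof -
          have "t \<in> fst ` L"
            using shadow_interval[OF left(1) \<beta> that] .
          then show ?thesis
            using half_width_le_half_gap[OF _ c d, of t] H0(2) by (simp add: half_width_def)
        qed
      qed (use left in simp)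
      then have "sin \<theta> \<le> 0"
        unfolding \<theta>_def sin_arctan by (simp add: divide_nonpos_pos add_pos_nonneg)
      then have "(sin \<theta>)\<^sup>2 < (x0 - (\<beta> + sin \<theta>))\<^sup>2"
        using x0 power_strict_mono[of "\<bar>sin \<theta>\<bar>" "x0 - (\<beta> + sin \<theta>)" 2] by simp
      moreover have "(cos \<theta>)\<^sup>2 \<le> (y0 - (0 - cos \<theta>))\<^sup>2"
        using y0 by (intro power_mono) (auto simp: \<theta>_def cos_arctan add_pos_nonneg)
      ultimately have "(x0, y0) \<notin> cball (\<beta> + sin \<theta>, 0 - cos \<theta>) 1"
        unfolding mem_cball_Pair_iff fst_conv snd_conv using sin_cos_squared_add[of \<theta>] by linarith
      then show ?thesis
        using tangent_disc_contains_symmetral[OF c(1) _ d _ \<beta> fib] True H0(2)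
        unfolding ball_separable_def \<theta>_def by (metis diff_0)
    next
      case False
      then obtain e where e: "e \<in> A" and "\<not> \<bar>\<beta> - fst e\<bar> < 1"
        using c d by blast
      then have "fst e = \<beta> - 1"
        using shadow_near_centres[OF \<beta> e] shadow_near_centres[OF left(1) e] left(2)
        by (auto simp: abs_le_iff abs_less_iff)
      then have "1 < (x0 - fst e)\<^sup>2"
        using x0 by (intro one_less_power) auto
      then have "1 < (x0 - fst e)\<^sup>2 + y0\<^sup>2"
        using zero_le_power2[of y0] by linarith
      then show ?thesis
        by (rule ball_separable_by_axis_disc[OF e])
    qed
  qed
qed

lemma ball_separable_upper_right:
  assumes p: "(x0, y0) \<notin> symmetral" and y0: "0 \<le> y0" and xl: "xl \<in> fst ` L" "xl \<le> x0"
  shows "ball_separable symmetral (x0, y0)"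
proof -
  obtain \<beta> where \<beta>: "\<beta> \<in> fst ` L" and max: "\<And>x. x \<in> fst ` L \<Longrightarrow> x \<le> \<beta>"
    using shadow_has_max by blast
  show ?thesis
  proof (cases "x0 \<le> \<beta>")
    case True
    then have "x0 \<in> fst ` L"
      using shadow_interval[OF xl(1) \<beta>] xl(2) by blast
    then show ?thesis
      using ball_separable_above_symmetral p y0 by (auto simp: mem_steiner_symmetral_vertical)
  next
    case False
    then show ?thesis
      using ball_separable_beyond_shadow_max[OF \<beta> max _ y0] by simp
  qed
qed

lemma ball_separable_right:
  assumes p: "(x0, y0) \<notin> symmetral" and xl: "xl \<in> fst ` L" "xl \<le> x0"
  shows "ball_separable symmetral (x0, y0)"
proof (cases "0 \<le> y0")
  case True
  then show ?thesis
    using ball_separable_upper_right[OF p _ xl] by blast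
next
  case False
  let ?f = "\<lambda>p :: real \<times> real. (fst p, - snd p)"
  have mem: "(x, - y) \<in> symmetral \<longleftrightarrow> (x, y) \<in> symmetral" for x y
    by (simp add: mem_steiner_symmetral_vertical)
  have sym: "?f ` symmetral = symmetral"
  proof
    show "?f ` symmetral \<subseteq> symmetral"
      using mem by auto
    show "symmetral \<subseteq> ?f ` symmetral"
    proof
      fix p assume "p \<in> symmetral"
      then have "?f p \<in> symmetral"
        using mem[of "fst p" "- snd p"] by simp
      then show "p \<in> ?f ` symmetral"
        by (rule image_eqI[rotated]) simp
    qed
  qed
  have "(x0, - y0) \<notin> symmetral"
    using p by (simp add: mem_steiner_symmetral_vertical)
  then have "ball_separable symmetral (x0, - y0)"
    using ball_separable_upper_right[OF _ _ xl] False by simp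
  then show ?thesis
    using ball_separable_linear_involution_iff[OF linear_isometry_reflect_snd,
        of symmetral "(x0, - y0)"]
    unfolding sym by simp
qed

lemma ball_separable_symmetral:
  assumes p: "p \<notin> symmetral"
  shows "ball_separable symmetral p"
proof (cases "\<exists>xl\<in>fst ` L. xl \<le> fst p")
  case True
  then show ?thesis
    using ball_separable_right[of "fst p" "snd p"] p by auto
next
  case False
  let ?f = "\<lambda>p :: real \<times> real. (- fst p, snd p)"
  have iso: "linear_isometry ?f" and inv: "\<And>p. ?f (?f p) = p" and "surj ?f"
    using linear_isometry_reflect_fst surjI[of ?f ?f] by auto
  interpret mirror: unit_disc_intersection "?f ` A" "?f ` L"
  proof
    show "compact (?f ` A)"
      by (intro compact_continuous_image continuous_intros compact_centres)
    show "?f ` L = (\<Inter>e\<in>?f ` A. cball e 1)"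
      unfolding L_eq using linear_isometry_inj[OF iso] \<open>surj ?f\<close>
      by (simp add: bij_image_INT bij_def linear_isometry_image_cball[OF iso])
  qed (use centres_nonempty L_nonempty in auto)
  have "mirror.symmetral = ?f ` symmetral"
    using steiner_symmetral_linear_isometry_image[OF iso, of "(0, 1)" L] by simp
  moreover have "?f p \<notin> ?f ` symmetral"
    using p inj_image_mem_iff[OF linear_isometry_inj[OF iso], of p symmetral] by simp
  moreover obtain x y where "(x, y) \<in> L"
    using L_nonempty by auto
  then have "- x \<in> fst ` ?f ` L" and "- x \<le> - fst p"
    using False by (force, force)
  ultimately have "ball_separable (?f ` symmetral) (?f p)"
    using mirror.ball_separable_right[of "- fst p" "snd p" "- x"] by simp
  then show ?thesis
    using ball_separable_linear_involution_iff[OF iso inv] by blast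
qed

end

lemma steiner_symmetral_vertical_ball_bodies:
  fixes L :: "(real \<times> real) set"
  assumes "L \<in> ball_bodies" and "L \<noteq> {}" and "bounded L"
  shows "steiner_symmetral (0, 1) L \<in> ball_bodies"
proof -
  interpret unit_disc_intersection "{c. L \<subseteq> cball c 1}" L
  proof
    show "compact {c. L \<subseteq> cball c 1}"
      using assms(2) by (rule compact_enclosing_centres)
    show "{c. L \<subseteq> cball c 1} \<noteq> {}"
      using assms(1,3) by (rule enclosing_centres_nonempty)
    show "L = (\<Inter>c\<in>{c. L \<subseteq> cball c 1}. cball c 1)"
      using assms(1) by (rule ball_body_eq_Inter_enclosing)
  qed (use assms(2) in auto)
  show ?thesis
    using ball_separable_symmetral by (rule ball_bodies_if_separable)
qed

definition plane_frame :: "real^2 \<Rightarrow> real \<times> real \<Rightarrow> real^2" where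
  "plane_frame u p = fst p *\<^sub>R vector [- u$2, u$1] + snd p *\<^sub>R u"

lemma
  fixes u :: "real^2"
  assumes "norm u = 1"
  shows linear_isometry_plane_frame: "linear_isometry (plane_frame u)"
    and surj_plane_frame: "surj (plane_frame u)"
    and plane_frame_vertical: "plane_frame u (0, 1) = u"
proof -
  define v :: "real^2" where "v = vector [- u$2, u$1]"
  have inner2: "x \<bullet> y = x$1 * y$1 + x$2 * y$2" for x y :: "real^2"
    by (simp add: inner_vec_def sum_2)
  have "u \<bullet> u = 1"
    using assms by (simp add: dot_square_norm)
  then have uu: "u$1 * u$1 + u$2 * u$2 = 1"
    unfolding inner2 .
  have frame: "u \<bullet> u = 1" "v \<bullet> v = 1" "u \<bullet> v = 0" "v \<bullet> u = 0"
    using uu unfolding v_def inner2 by (simp_all add: algebra_simps)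
  have pf: "plane_frame u p = fst p *\<^sub>R v + snd p *\<^sub>R u" for p
    unfolding plane_frame_def v_def ..
  show "linear_isometry (plane_frame u)"
    unfolding linear_isometry_def pf
    by (auto simp: linear_iff algebra_simps inner_add_left inner_add_right frame inner_prod_def)
  have "plane_frame u (z \<bullet> v, z \<bullet> u) = z" for z
  proof -
    have "z$1 * (u$1 * u$1 + u$2 * u$2) = z$1" "z$2 * (u$1 * u$1 + u$2 * u$2) = z$2"
      using uu by simp_all
    then show ?thesis
      unfolding pf vec_eq_iff forall_2 inner2 by (simp add: v_def algebra_simps)
  qed
  then show "surj (plane_frame u)"
    by (rule surjI[where f = "\<lambda>z. (z \<bullet> v, z \<bullet> u)"])
  show "plane_frame u (0, 1) = u"
    by (simp add: plane_frame_def)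
qed

theorem theorem4p1:
  fixes K :: "(real^2) set" and u :: "real^2"
  assumes "K \<in> ball_bodies" and "K \<noteq> {}" and "bounded K" and "norm u = 1"
  shows "steiner_symmetral u K \<in> ball_bodies"
proof -
  define L where "L = plane_frame u -` K"
  let ?f = "plane_frame u"
  have iso: "linear_isometry ?f" and "surj ?f" and u: "?f (0, 1) = u"
    using assms(4) linear_isometry_plane_frame surj_plane_frame plane_frame_vertical by auto
  then have K: "K = ?f ` L"
    unfolding L_def by (simp add: surj_image_vimage_eq)
  have "L \<in> ball_bodies" "L \<noteq> {}" "bounded L"
    using assms(1-3) ball_bodies_linear_isometry_image_iff[OF iso \<open>surj ?f\<close>]
      bounded_linear_isometry_image_iff[OF iso] unfolding K by auto
  then have "steiner_symmetral (0, 1) L \<in> ball_bodies"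
    by (rule steiner_symmetral_vertical_ball_bodies)
  then show ?thesis
    unfolding K using steiner_symmetral_linear_isometry_image[OF iso, of "(0, 1)" L] u
      ball_bodies_linear_isometry_image_iff[OF iso \<open>surj ?f\<close>] by simp
qed

end
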